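(* Let $\sigma_0,\sigma_\epsilon>0$, $\theta_0\in\mathbb{R}$, prior $\Theta\sim N(\theta_0,\sigma_0^2)$, signal $X=\Theta+\epsilon$ with $\epsilon\sim\mathrm{Laplace}(0,\sigma_\epsilon)$ independent of $\Theta$, and let $\theta_1(x)=\mathbb{E}[\Theta\mid X=x]$. With $a=\sqrt2\sigma_0/\sigma_\epsilon$, the DeGroot coefficient $\omega=\frac{d\theta_1}{dx}\big|_{x=\theta_0}$ is $$\omega=\frac a2\Bigl(\frac{2}{\sqrt\pi\,\operatorname{erfcx}(a/2)}-a\Bigr),$$ where $\operatorname{erfcx}(y)=e^{y^2}\bigl(1-\frac{2}{\sqrt\pi}\int_0^y e^{-t^2}dt\bigr)$.
   Context: $\mathrm{Laplace}(\mu,s)$ has density $t\mapsto\frac{1}{2s}e^{-|t-\mu|/s}$. The posterior mean is $\theta_1(x)=\frac{\int\theta f_\Theta(\theta)l_\epsilon(x-\theta)d\theta}{\int f_\Theta(\theta)l_\epsilon(x-\theta)d\theta}$. *)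

theory Defs
  imports "HOL-Analysis.Analysis"
begin

definition normal_dens :: "real \<Rightarrow> real \<Rightarrow> real \<Rightarrow> real" where
  "normal_dens mu s t = exp (- ((t - mu)^2) / (2 * s^2)) / (s * sqrt (2 * pi))"

definition laplace_dens :: "real \<Rightarrow> real \<Rightarrow> real \<Rightarrow> real" where
  "laplace_dens mu s t = exp (- \<bar>t - mu\<bar> / s) / (2 * s)"

definition post_mean :: "real \<Rightarrow> real \<Rightarrow> real \<Rightarrow> real \<Rightarrow> real" where
  "post_mean theta0 sigma0 sigmaeps x =
     (LINT theta|lborel. theta * normal_dens theta0 sigma0 theta * laplace_dens 0 sigmaeps (x - theta))
   / (LINT theta|lborel. normal_dens theta0 sigma0 theta * laplace_dens 0 sigmaeps (x - theta))"

definition erfcx :: "real \<Rightarrow> real" where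
  "erfcx y = exp (y^2) * (1 - 2 / sqrt pi * (LBINT t=0..y. exp (- (t^2))))"

end

theory Submission
  imports Defs "HOL-Probability.Probability"
begin

text \<open>
  Substituting \<open>\<theta> = \<theta>\<^sub>0 + b t\<close> with \<open>b = sqrt 2 \<sigma>\<^sub>0\<close> turns the posterior mean at \<open>x\<close> into
  \<open>\<theta>\<^sub>0 + b N(y) / D(y)\<close> with \<open>y = (x - \<theta>\<^sub>0) / b\<close>, where \<open>D\<close> and \<open>N\<close> are the convolutions
  of \<open>exp(-t\<^sup>2)\<close> and \<open>t exp(-t\<^sup>2)\<close> with the kernel \<open>exp(-a \<bar>y - t\<bar>)\<close>.
  Splitting the kernel at \<open>y\<close> writes such a convolution as
  \<open>exp(-a y) \<integral>\<^sub>-\<^sub>\<infinity>\<^sup>y h(t) exp(a t) dt + exp(a y) \<integral>\<^sub>y\<^sup>\<infinity> h(t) exp(-a t) dt\<close>, so by the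
  fundamental theorem of calculus it is differentiable with derivative
  \<open>a \<integral> sgn(t - y) h(t) exp(-a \<bar>y - t\<bar>) dt\<close>.
  At \<open>y = 0\<close> the numerator \<open>N\<close> vanishes by oddness, and completing the square
  \<open>a\<^sup>2/4 - (t + a/2)\<^sup>2 = -t\<^sup>2 - a t\<close> reduces \<open>D(0)\<close> and \<open>N'(0)\<close> to Gaussian tail integrals:
  \<open>D(0) = sqrt \<pi> erfcx(a/2)\<close> and \<open>N'(0) = a (1 - (a/2) sqrt \<pi> erfcx(a/2))\<close>.
  The quotient rule then gives \<open>\<omega> = N'(0) / D(0)\<close>.
\<close>

definition laplace_conv :: "real \<Rightarrow> (real \<Rightarrow> real) \<Rightarrow> real \<Rightarrow> real" where
  "laplace_conv a h x = (LINT t|lborel. h t * exp (- a * \<bar>x - t\<bar>))"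

lemma integrable_bounded_mult_laplace_kernel:
  fixes g h :: "real \<Rightarrow> real"
  assumes h: "integrable lborel h" and g: "g \<in> borel_measurable borel" "\<And>t. \<bar>g t\<bar> \<le> 1"
    and a: "a \<ge> 0"
  shows "integrable lborel (\<lambda>t. g t * h t * exp (- a * \<bar>x - t\<bar>))"
proof (rule Bochner_Integration.integrable_bound[OF h])
  show "(\<lambda>t. g t * h t * exp (- a * \<bar>x - t\<bar>)) \<in> borel_measurable lborel"
    using h g by measurable
  show "AE t in lborel. norm (g t * h t * exp (- a * \<bar>x - t\<bar>)) \<le> norm (h t)"
  proof (intro AE_I2)
    fix t
    have "\<bar>g t\<bar> * exp (- a * \<bar>x - t\<bar>) \<le> 1 * 1"
      using g(2)[of t] a by (intro mult_mono) auto
    then have "\<bar>h t\<bar> * (\<bar>g t\<bar> * exp (- a * \<bar>x - t\<bar>)) \<le> \<bar>h t\<bar> * 1"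
      by (intro mult_left_mono) auto
    then show "norm (g t * h t * exp (- a * \<bar>x - t\<bar>)) \<le> norm (h t)"
      by (simp add: abs_mult mult_ac)
  qed
qed

lemma integrable_mult_laplace_kernel:
  fixes h :: "real \<Rightarrow> real"
  assumes "integrable lborel h" and "a \<ge> 0"
  shows "integrable lborel (\<lambda>t. h t * exp (- a * \<bar>x - t\<bar>))"
  using integrable_bounded_mult_laplace_kernel[OF assms(1) _ _ assms(2), of "\<lambda>_. 1"] by simp

lemma set_integrable_mult_exp_bounded:
  fixes h :: "real \<Rightarrow> real"
  assumes h: "integrable lborel h" and S: "S \<in> sets borel"
    and bound: "\<And>t. t \<in> S \<Longrightarrow> c * t \<le> B"
  shows "set_integrable lborel S (\<lambda>t. h t * exp (c * t))"
  unfolding set_integrable_def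
proof (rule Bochner_Integration.integrable_bound)
  show "integrable lborel (\<lambda>t. exp B * h t)"
    using h by simp
  show "(\<lambda>t. indicator S t *\<^sub>R (h t * exp (c * t))) \<in> borel_measurable lborel"
    using h S by measurable
  show "AE t in lborel. norm (indicator S t *\<^sub>R (h t * exp (c * t))) \<le> norm (exp B * h t)"
  proof (intro AE_I2)
    fix t
    have "t \<in> S \<Longrightarrow> \<bar>h t\<bar> * exp (c * t) \<le> \<bar>h t\<bar> * exp B"
      using bound by (intro mult_left_mono) auto
    then show "norm (indicator S t *\<^sub>R (h t * exp (c * t))) \<le> norm (exp B * h t)"
      by (auto simp: abs_mult indicator_def mult.commute)
  qed
qed

lemma interval_integrable_mult_exp_tails:
  fixes h :: "real \<Rightarrow> real"
  assumes h: "integrable lborel h" and a: "a \<ge> 0"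
  shows "interval_lebesgue_integrable lborel (-\<infinity>) (ereal m) (\<lambda>t. h t * exp (a * t))"
    and "interval_lebesgue_integrable lborel (ereal m) \<infinity> (\<lambda>t. h t * exp (- a * t))"
proof -
  have "set_integrable lborel {..<m} (\<lambda>t. h t * exp (a * t))"
    by (rule set_integrable_mult_exp_bounded[OF h, where B = "a * m"]) (use a in \<open>auto intro: mult_left_mono\<close>)
  then show "interval_lebesgue_integrable lborel (-\<infinity>) (ereal m) (\<lambda>t. h t * exp (a * t))"
    by (simp add: interval_lebesgue_integrable_def)
  have "set_integrable lborel {m<..} (\<lambda>t. h t * exp (- a * t))"
    by (rule set_integrable_mult_exp_bounded[OF h, where B = "- a * m"]) (use a in \<open>auto intro: mult_left_mono\<close>)
  then show "interval_lebesgue_integrable lborel (ereal m) \<infinity> (\<lambda>t. h t * exp (- a * t))"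
    by (simp add: interval_lebesgue_integrable_def)
qed

lemma DERIV_interval_integral_upper_limit:
  fixes p :: "real \<Rightarrow> real"
  assumes "continuous_on UNIV p"
  shows "((\<lambda>x. LBINT t=ereal x0..ereal x. p t) has_real_derivative p x0) (at x0)"
proof -
  have "((\<lambda>x. LBINT t=x0..x. p t) has_vector_derivative p x0) (at x0 within {x0-1..x0+1})"
    by (rule interval_integral_FTC2) (auto intro: continuous_on_subset[OF assms])
  then show ?thesis
    by (simp add: at_within_Icc_at has_real_derivative_iff_has_vector_derivative)
qed

lemma DERIV_lower_tail_integral:
  fixes p :: "real \<Rightarrow> real"
  assumes "continuous_on UNIV p" and "\<And>m. interval_lebesgue_integrable lborel (-\<infinity>) (ereal m) p"
  shows "((\<lambda>x. LBINT t=-\<infinity>..ereal x. p t) has_real_derivative p x0) (at x0)"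
proof -
  define P0 where "P0 = (LBINT t=-\<infinity>..ereal x0. p t)"
  have "(LBINT t=-\<infinity>..ereal x. p t) = P0 + (LBINT t=ereal x0..ereal x. p t)" for x
    unfolding P0_def
    by (rule interval_integral_sum[symmetric]) (cases "x0 \<le> x"; simp add: max_def assms(2))
  then show ?thesis
    by (simp only:) (auto intro!: derivative_eq_intros DERIV_interval_integral_upper_limit assms(1))
qed

lemma DERIV_upper_tail_integral:
  fixes q :: "real \<Rightarrow> real"
  assumes "continuous_on UNIV q" and "\<And>m. interval_lebesgue_integrable lborel (ereal m) \<infinity> q"
  shows "((\<lambda>x. LBINT t=ereal x..\<infinity>. q t) has_real_derivative - q x0) (at x0)"
proof -
  define Q0 where "Q0 = (LBINT t=ereal x0..\<infinity>. q t)"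
  have "(LBINT t=ereal x..\<infinity>. q t) = Q0 - (LBINT t=ereal x0..ereal x. q t)" for x
    using interval_integral_sum[of "ereal x0" "ereal x" \<infinity> q] unfolding Q0_def
    by (cases "x0 \<le> x"; simp add: min_def assms(2))
  then show ?thesis
    by (simp only:) (auto intro!: derivative_eq_intros DERIV_interval_integral_upper_limit assms(1))
qed

lemma lborel_integral_split_at:
  fixes f :: "real \<Rightarrow> real"
  assumes "integrable lborel f"
  shows "(LINT t|lborel. f t) = (LBINT t=-\<infinity>..ereal x. f t) + (LBINT t=ereal x..\<infinity>. f t)"
proof -
  have "interval_lebesgue_integrable lborel (-\<infinity>) \<infinity> f"
    using assms by (simp add: interval_lebesgue_integrable_def set_integrable_def)
  then have "(LBINT t=-\<infinity>..ereal x. f t) + (LBINT t=ereal x..\<infinity>. f t) = (LBINT t=-\<infinity>..\<infinity>. f t)"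
    by (intro interval_integral_sum) simp
  then show ?thesis
    by (simp add: interval_lebesgue_integral_def set_lebesgue_integral_def)
qed

lemma laplace_conv_split:
  fixes h :: "real \<Rightarrow> real"
  assumes "integrable lborel h" and "a \<ge> 0"
  shows "laplace_conv a h x =
    exp (- a * x) * (LBINT t=-\<infinity>..ereal x. h t * exp (a * t)) +
    exp (a * x) * (LBINT t=ereal x..\<infinity>. h t * exp (- a * t))"
proof -
  have "laplace_conv a h x =
    (LBINT t=-\<infinity>..ereal x. h t * exp (- a * \<bar>x - t\<bar>)) + (LBINT t=ereal x..\<infinity>. h t * exp (- a * \<bar>x - t\<bar>))"
    unfolding laplace_conv_def by (intro lborel_integral_split_at integrable_mult_laplace_kernel assms)
  also have "(LBINT t=-\<infinity>..ereal x. h t * exp (- a * \<bar>x - t\<bar>)) =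
      (LBINT t=-\<infinity>..ereal x. exp (- a * x) * (h t * exp (a * t)))"
    by (intro interval_integral_cong) (auto simp: einterval_iff mult_exp_exp algebra_simps)
  also have "(LBINT t=ereal x..\<infinity>. h t * exp (- a * \<bar>x - t\<bar>)) =
      (LBINT t=ereal x..\<infinity>. exp (a * x) * (h t * exp (- a * t)))"
    by (intro interval_integral_cong) (auto simp: einterval_iff mult_exp_exp algebra_simps)
  finally show ?thesis by simp
qed

lemma integral_sgn_laplace_kernel_split:
  fixes h :: "real \<Rightarrow> real"
  assumes "integrable lborel h" and "a \<ge> 0"
  shows "(LINT t|lborel. sgn (t - x) * h t * exp (- a * \<bar>x - t\<bar>)) =
    exp (a * x) * (LBINT t=ereal x..\<infinity>. h t * exp (- a * t)) -
    exp (- a * x) * (LBINT t=-\<infinity>..ereal x. h t * exp (a * t))"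
proof -
  have "(LINT t|lborel. sgn (t - x) * h t * exp (- a * \<bar>x - t\<bar>)) =
    (LBINT t=-\<infinity>..ereal x. sgn (t - x) * h t * exp (- a * \<bar>x - t\<bar>)) +
    (LBINT t=ereal x..\<infinity>. sgn (t - x) * h t * exp (- a * \<bar>x - t\<bar>))"
    by (intro lborel_integral_split_at integrable_bounded_mult_laplace_kernel assms)
      (auto simp: abs_sgn_eq)
  also have "(LBINT t=-\<infinity>..ereal x. sgn (t - x) * h t * exp (- a * \<bar>x - t\<bar>)) =
      (LBINT t=-\<infinity>..ereal x. - (exp (- a * x) * (h t * exp (a * t))))"
    by (intro interval_integral_cong) (auto simp: einterval_iff mult_exp_exp algebra_simps)
  also have "(LBINT t=ereal x..\<infinity>. sgn (t - x) * h t * exp (- a * \<bar>x - t\<bar>)) =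
      (LBINT t=ereal x..\<infinity>. exp (a * x) * (h t * exp (- a * t)))"
    by (intro interval_integral_cong) (auto simp: einterval_iff mult_exp_exp algebra_simps)
  finally show ?thesis by (simp add: interval_lebesgue_integral_uminus)
qed

lemma DERIV_laplace_conv:
  fixes h :: "real \<Rightarrow> real"
  assumes h_cont: "continuous_on UNIV h" and h_int: "integrable lborel h" and a: "a \<ge> 0"
  shows "(laplace_conv a h has_real_derivative
    a * (LINT t|lborel. sgn (t - x) * h t * exp (- a * \<bar>x - t\<bar>))) (at x)"
proof -
  define P where "P y = (LBINT t=-\<infinity>..ereal y. h t * exp (a * t))" for y
  define Q where "Q y = (LBINT t=ereal y..\<infinity>. h t * exp (- a * t))" for y
  have conv: "laplace_conv a h = (\<lambda>y. exp (- a * y) * P y + exp (a * y) * Q y)"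
    using laplace_conv_split[OF h_int a] by (auto simp: P_def Q_def)
  have "(P has_real_derivative h x * exp (a * x)) (at x)"
    unfolding P_def by (intro DERIV_lower_tail_integral interval_integrable_mult_exp_tails h_int a)
      (intro continuous_intros h_cont)
  moreover have "(Q has_real_derivative - (h x * exp (- a * x))) (at x)"
    unfolding Q_def by (intro DERIV_upper_tail_integral interval_integrable_mult_exp_tails h_int a)
      (intro continuous_intros h_cont)
  ultimately have "((\<lambda>y. exp (- a * y) * P y + exp (a * y) * Q y) has_real_derivative
      a * (exp (a * x) * Q x - exp (- a * x) * P x)) (at x)"
    by (auto intro!: derivative_eq_intros simp: algebra_simps mult_exp_exp)
  then show ?thesis
    by (simp only: conv integral_sgn_laplace_kernel_split[OF h_int a] P_def Q_def)
qed

lemma laplace_conv_pos: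
  fixes h :: "real \<Rightarrow> real"
  assumes h_int: "integrable lborel h" and h_pos: "\<And>t. h t > 0" and a: "a \<ge> 0"
  shows "laplace_conv a h x > 0"
proof -
  have int: "integrable lborel (\<lambda>t. h t * exp (- a * \<bar>x - t\<bar>))"
    by (rule integrable_mult_laplace_kernel[OF h_int a])
  have nonneg: "0 \<le> h t * exp (- a * \<bar>x - t\<bar>)" for t
    using h_pos[of t] by simp
  have "laplace_conv a h x \<ge> 0"
    unfolding laplace_conv_def using nonneg by (intro integral_nonneg_AE) auto
  moreover have "laplace_conv a h x \<noteq> 0"
  proof
    assume "laplace_conv a h x = 0"
    then have "AE t in lborel. h t * exp (- a * \<bar>x - t\<bar>) = 0"
      unfolding laplace_conv_def by (subst (asm) integral_nonneg_eq_0_iff_AE[OF int]) (use nonneg in auto)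
    moreover have "h t \<noteq> 0" for t
      using h_pos[of t] by simp
    ultimately have "AE (t::real) in lborel. False"
      by simp
    then show False
      by (subst (asm) AE_iff_measurable[where N = UNIV]) auto
  qed
  ultimately show ?thesis by simp
qed

lemma laplace_conv_odd_at_0:
  fixes h :: "real \<Rightarrow> real"
  assumes odd: "\<And>t. h (- t) = - h t"
  shows "laplace_conv a h 0 = 0"
proof -
  define f where "f t = h t * exp (- a * \<bar>0 - t\<bar>)" for t
  have "(LINT t|lborel. f t) = \<bar>-1::real\<bar> *\<^sub>R (LINT t|lborel. f (0 + -1 * t))"
    by (rule lborel_integral_real_affine) simp
  also have "\<dots> = (LINT t|lborel. - f t)"
    by (simp add: f_def odd)
  also have "\<dots> = - (LINT t|lborel. f t)"
    by (rule integral_minus)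
  finally show ?thesis
    unfolding laplace_conv_def f_def by simp
qed

lemma integrable_gaussian: "integrable lborel (\<lambda>t::real. exp (- t\<^sup>2))"
  using has_bochner_integral_even_function[OF gaussian_moment_0] by (auto intro: integrable.intros)

lemma integrable_gaussian_first_moment: "integrable lborel (\<lambda>t::real. t * exp (- t\<^sup>2))"
  using has_bochner_integral_odd_function[OF gaussian_moment_1]
  by (auto intro: integrable.intros simp: mult.commute)

lemma post_mean_eq_laplace_conv:
  fixes sigma0 s c x :: real
  assumes sigma0: "sigma0 > 0" and s: "s > 0"
  defines "b \<equiv> sqrt 2 * sigma0"
  defines "y \<equiv> (x - c) / b"
  shows "post_mean c sigma0 s x =
    (c * laplace_conv (b / s) (\<lambda>t. exp (- t\<^sup>2)) y + b * laplace_conv (b / s) (\<lambda>t. t * exp (- t\<^sup>2)) y)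
    / laplace_conv (b / s) (\<lambda>t. exp (- t\<^sup>2)) y"
proof -
  define a where "a = b / s"
  define K where "K = 1 / (sigma0 * sqrt (2 * pi)) / (2 * s)"
  have b: "b > 0" using sigma0 by (simp add: b_def)
  have a: "a \<ge> 0" using b s by (simp add: a_def)
  have K: "K > 0" using sigma0 s by (simp add: K_def)
  have subst: "(LINT t|lborel. f t) = b * (LINT v|lborel. f (c + b * v))" for f :: "real \<Rightarrow> real"
    using lborel_integral_real_affine[of b f c] b by simp
  have normal: "normal_dens c sigma0 (c + b * v) = exp (- v\<^sup>2) / (sigma0 * sqrt (2 * pi))" for v
  proof -
    have "(c + b * v - c)\<^sup>2 / (2 * sigma0\<^sup>2) = v\<^sup>2"
      using sigma0 by (simp add: b_def power_mult_distrib)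
    then show ?thesis unfolding normal_dens_def by simp
  qed
  have laplace: "laplace_dens 0 s (x - (c + b * v)) = exp (- a * \<bar>y - v\<bar>) / (2 * s)" for v
  proof -
    have "x - (c + b * v) = b * (y - v)" using b by (simp add: y_def field_simps)
    then have "\<bar>x - (c + b * v) - 0\<bar> / s = a * \<bar>y - v\<bar>"
      using b by (simp add: abs_mult a_def)
    then show ?thesis unfolding laplace_dens_def by simp
  qed
  have "(LINT t|lborel. t * normal_dens c sigma0 t * laplace_dens 0 s (x - t)) =
      b * (LINT v|lborel. K * (c * (exp (- v\<^sup>2) * exp (- a * \<bar>y - v\<bar>))
        + b * (v * exp (- v\<^sup>2) * exp (- a * \<bar>y - v\<bar>))))"
    by (subst subst, rule arg_cong[where f = "\<lambda>z. b * z"], rule Bochner_Integration.integral_cong[OF refl])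
      (simp only: normal laplace, simp add: K_def field_simps)
  also have "\<dots> = b * (K * (c * laplace_conv a (\<lambda>t. exp (- t\<^sup>2)) y + b * laplace_conv a (\<lambda>t. t * exp (- t\<^sup>2)) y))"
    using integrable_mult_laplace_kernel[OF integrable_gaussian a]
      integrable_mult_laplace_kernel[OF integrable_gaussian_first_moment a]
    by (simp add: laplace_conv_def)
  finally have num: "(LINT t|lborel. t * normal_dens c sigma0 t * laplace_dens 0 s (x - t)) = \<dots>" .
  have "(LINT t|lborel. normal_dens c sigma0 t * laplace_dens 0 s (x - t)) =
      b * (LINT v|lborel. K * (exp (- v\<^sup>2) * exp (- a * \<bar>y - v\<bar>)))"
    by (subst subst, rule arg_cong[where f = "\<lambda>z. b * z"], rule Bochner_Integration.integral_cong[OF refl])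
      (simp only: normal laplace, simp add: K_def field_simps)
  also have "\<dots> = b * (K * laplace_conv a (\<lambda>t. exp (- t\<^sup>2)) y)"
    by (simp add: laplace_conv_def)
  finally have den: "(LINT t|lborel. normal_dens c sigma0 t * laplace_dens 0 s (x - t)) = \<dots>" .
  show ?thesis
    unfolding post_mean_def num den a_def y_def using b K by (simp add: mult.assoc[symmetric])
qed

lemma has_bochner_integral_gaussian_tail:
  fixes y :: real
  assumes y: "y \<ge> 0"
  shows "has_bochner_integral lborel (\<lambda>u. indicator {0..} u *\<^sub>R exp (- (u + y)\<^sup>2))
    (sqrt pi / 2 - (LBINT t=0..y. exp (- (t^2))))"
proof -
  have "set_integrable lborel {0..<y} (\<lambda>t::real. exp (- (t^2)))"
    by (intro set_integrable_subset[OF borel_integrable_atLeastAtMost'[of 0 y]] continuous_intros) auto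
  then have "has_bochner_integral lborel (\<lambda>t. indicator {0..<y} t *\<^sub>R exp (- (t^2)))
      (LBINT t=0..y. exp (- (t^2)))"
    using y interval_integral_Ico[of 0 y "\<lambda>t. exp (- (t^2))"]
    by (simp add: has_bochner_integral_iff set_integrable_def set_lebesgue_integral_def zero_ereal_def)
  from has_bochner_integral_diff[OF gaussian_moment_0 this]
  have "has_bochner_integral lborel (\<lambda>t. indicator {y..} t *\<^sub>R exp (- (t^2)))
      (sqrt pi / 2 - (LBINT t=0..y. exp (- (t^2))))"
    by (rule has_bochner_integral_cong[THEN iffD1, rotated 3]) (use y in \<open>auto simp: indicator_def\<close>)
  then have "has_bochner_integral lborel (\<lambda>u. indicator {y..} (y + 1 * u) *\<^sub>R exp (- ((y + 1 * u)^2)))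
      ((sqrt pi / 2 - (LBINT t=0..y. exp (- (t^2)))) /\<^sub>R \<bar>1\<bar>)"
    by (subst (asm) lborel_has_bochner_integral_real_affine_iff[where c = 1 and t = y]) simp_all
  then show ?thesis
    by (rule has_bochner_integral_cong[THEN iffD1, rotated 3]) (auto simp: indicator_def add.commute)
qed

lemma has_bochner_integral_gaussian_first_moment_tail:
  fixes y :: real
  assumes y: "y \<ge> 0"
  shows "has_bochner_integral lborel (\<lambda>u. indicator {0..} u *\<^sub>R ((u + y) * exp (- (u + y)\<^sup>2)))
    (exp (- y\<^sup>2) / 2)"
proof -
  have "set_integrable lborel {0..<y} (\<lambda>t::real. t * exp (- (t^2)))"
    by (intro set_integrable_subset[OF borel_integrable_atLeastAtMost'[of 0 y]] continuous_intros) auto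
  moreover have "(LBINT t=ereal 0..ereal y. t * exp (- (t^2))) = (- exp (- y\<^sup>2) / 2) - (- exp (- 0\<^sup>2) / 2)"
  proof (rule interval_integral_FTC_finite)
    fix x :: real
    have "((\<lambda>t. - exp (- t\<^sup>2) / 2) has_real_derivative x * exp (- (x^2))) (at x within {min 0 y..max 0 y})"
      by (auto intro!: derivative_eq_intros simp: power2_eq_square)
    then show "((\<lambda>t. - exp (- t\<^sup>2) / 2) has_vector_derivative x * exp (- (x^2))) (at x within {min 0 y..max 0 y})"
      by (simp add: has_real_derivative_iff_has_vector_derivative)
  qed (intro continuous_intros)
  ultimately have "has_bochner_integral lborel (\<lambda>t. indicator {0..<y} t *\<^sub>R (t * exp (- (t^2))))
      ((1 - exp (- y\<^sup>2)) / 2)"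
    using y interval_integral_Ico[of 0 y "\<lambda>t. t * exp (- (t^2))"]
    by (simp add: has_bochner_integral_iff set_integrable_def set_lebesgue_integral_def diff_divide_distrib)
  from has_bochner_integral_diff[OF gaussian_moment_1 this]
  have "has_bochner_integral lborel (\<lambda>t. indicator {y..} t *\<^sub>R (t * exp (- (t^2)))) (exp (- y\<^sup>2) / 2)"
    by (rule has_bochner_integral_cong[THEN iffD1, rotated 3]) (use y in \<open>auto simp: indicator_def field_simps\<close>)
  then have "has_bochner_integral lborel
      (\<lambda>u. indicator {y..} (y + 1 * u) *\<^sub>R ((y + 1 * u) * exp (- ((y + 1 * u)^2)))) ((exp (- y\<^sup>2) / 2) /\<^sub>R \<bar>1\<bar>)"
    by (subst (asm) lborel_has_bochner_integral_real_affine_iff[where c = 1 and t = y]) simp_all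
  then show ?thesis
    by (rule has_bochner_integral_cong[THEN iffD1, rotated 3]) (auto simp: indicator_def add.commute)
qed

lemma sqrt_pi_erfcx:
  "sqrt pi * erfcx y = 2 * exp (y\<^sup>2) * (sqrt pi / 2 - (LBINT t=0..y. exp (- (t^2))))"
  unfolding erfcx_def by (simp add: field_simps)

lemma exp_complete_square:
  fixes a u :: real
  shows "exp (a\<^sup>2 / 4) * exp (- (u + a / 2)\<^sup>2) = exp (- u\<^sup>2) * exp (- a * u)"
proof -
  have "a\<^sup>2 / 4 + - (u + a / 2)\<^sup>2 = - u\<^sup>2 + - a * u"
    by (simp add: power2_eq_square field_simps)
  then show ?thesis
    by (simp add: exp_add[symmetric])
qed

lemma laplace_conv_gaussian_at_0:
  fixes a :: real
  assumes a: "a \<ge> 0"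
  shows "laplace_conv a (\<lambda>t. exp (- t\<^sup>2)) 0 = sqrt pi * erfcx (a / 2)"
proof -
  have "has_bochner_integral lborel (\<lambda>u. exp (a\<^sup>2 / 4) * (indicator {0..} u *\<^sub>R exp (- (u + a / 2)\<^sup>2)))
      (exp (a\<^sup>2 / 4) * (sqrt pi / 2 - (LBINT t=0..a/2. exp (- (t^2)))))"
    by (rule has_bochner_integral_mult_right[OF has_bochner_integral_gaussian_tail]) (use a in simp)
  then have "has_bochner_integral lborel (\<lambda>u. indicator {0..} u *\<^sub>R (exp (- u\<^sup>2) * exp (- a * \<bar>0 - u\<bar>)))
      (sqrt pi * erfcx (a / 2) / 2)"
    by (rule has_bochner_integral_cong[THEN iffD1, rotated 3])
      (auto simp: indicator_def exp_complete_square sqrt_pi_erfcx power_divide)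
  from has_bochner_integral_even_function[OF this]
  show ?thesis
    unfolding laplace_conv_def by (simp add: has_bochner_integral_integral_eq)
qed

lemma integral_sgn_gaussian_first_moment_laplace_kernel:
  fixes a :: real
  assumes a: "a \<ge> 0"
  shows "(LINT t|lborel. sgn (t - 0) * (t * exp (- t\<^sup>2)) * exp (- a * \<bar>0 - t\<bar>))
    = 1 - a / 2 * (sqrt pi * erfcx (a / 2))"
proof -
  define E where "E = exp (a\<^sup>2 / 4)"
  define J where "J = sqrt pi / 2 - (LBINT t=0..a/2. exp (- (t^2)))"
  have int_diff: "has_bochner_integral lborel
      (\<lambda>u. E * (indicator {0..} u *\<^sub>R ((u + a / 2) * exp (- (u + a / 2)\<^sup>2)))
         - E * (a / 2) * (indicator {0..} u *\<^sub>R exp (- (u + a / 2)\<^sup>2)))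
      (E * (exp (- (a / 2)\<^sup>2) / 2) - E * (a / 2) * J)"
    unfolding J_def using a
    by (intro has_bochner_integral_diff has_bochner_integral_mult_right
        has_bochner_integral_gaussian_tail has_bochner_integral_gaussian_first_moment_tail) simp_all
  have total: "E * (exp (- (a / 2)\<^sup>2) / 2) - E * (a / 2) * J = (1 - a / 2 * (sqrt pi * erfcx (a / 2))) / 2"
    by (simp add: E_def J_def sqrt_pi_erfcx field_simps flip: exp_add)
  have pointwise: "E * (indicator {0..} u *\<^sub>R ((u + a / 2) * exp (- (u + a / 2)\<^sup>2)))
      - E * (a / 2) * (indicator {0..} u *\<^sub>R exp (- (u + a / 2)\<^sup>2))
      = indicator {0..} u *\<^sub>R (sgn (u - 0) * (u * exp (- u\<^sup>2)) * exp (- a * \<bar>0 - u\<bar>))" for u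
  proof (cases "u > 0")
    case True
    then show ?thesis
      using exp_complete_square[of a u] by (simp add: E_def algebra_simps)
  qed (auto simp: indicator_def)
  from int_diff[unfolded total pointwise]
  have "has_bochner_integral lborel
      (\<lambda>u. indicator {0..} u *\<^sub>R (sgn (u - 0) * (u * exp (- u\<^sup>2)) * exp (- a * \<bar>0 - u\<bar>)))
      ((1 - a / 2 * (sqrt pi * erfcx (a / 2))) / 2)" .
  from has_bochner_integral_even_function[OF this]
  show ?thesis
    by (simp add: has_bochner_integral_integral_eq sgn_minus)
qed

lemma DERIV_laplace_conv_gaussian_first_moment_at_0:
  fixes a :: real
  assumes a: "a \<ge> 0"
  shows "(laplace_conv a (\<lambda>t. t * exp (- t\<^sup>2)) has_real_derivative
    a * (1 - a / 2 * (sqrt pi * erfcx (a / 2)))) (at 0)"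
  using DERIV_laplace_conv[OF _ integrable_gaussian_first_moment a, of 0,
      unfolded integral_sgn_gaussian_first_moment_laplace_kernel[OF a]]
  by (simp add: continuous_intros)

lemma DERIV_affine_ratio:
  fixes D N :: "real \<Rightarrow> real"
  assumes "(D has_real_derivative D') (at y)" and "(N has_real_derivative N') (at y)"
    and "D y \<noteq> 0" and "N y = 0"
  shows "((\<lambda>z. (c * D z + b * N z) / D z) has_real_derivative b * N' / D y) (at y)"
proof -
  have "((\<lambda>z. (c * D z + b * N z) / D z) has_real_derivative
      ((c * D' + b * N') * D y - (c * D y + b * N y) * D') / (D y * D y)) (at y)"
    by (intro DERIV_divide DERIV_add DERIV_cmult assms(1-3))
  moreover have "((c * D' + b * N') * D y - (c * D y + b * N y) * D') / (D y * D y) = b * N' / D y"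
    using assms(3,4) by (simp add: field_simps)
  ultimately show ?thesis by simp
qed

theorem mainTheorem15:
  fixes sigma0 sigmaeps theta0 :: real
  assumes "sigma0 > 0" and "sigmaeps > 0"
  defines "a \<equiv> sqrt 2 * sigma0 / sigmaeps"
  shows "(post_mean theta0 sigma0 sigmaeps has_real_derivative
            (a / 2) * (2 / (sqrt pi * erfcx (a / 2)) - a)) (at theta0)"
proof -
  define b where "b = sqrt 2 * sigma0"
  define D where "D = laplace_conv a (\<lambda>t. exp (- t\<^sup>2))"
  define N where "N = laplace_conv a (\<lambda>t. t * exp (- t\<^sup>2))"
  define F where "F y = (theta0 * D y + b * N y) / D y" for y
  have b: "b > 0" and a: "a > 0"
    using assms(1,2) by (simp_all add: a_def b_def)
  have post_mean: "post_mean theta0 sigma0 sigmaeps = (\<lambda>x. F ((x - theta0) / b))"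
    using post_mean_eq_laplace_conv[OF assms(1,2)] by (simp add: fun_eq_iff F_def D_def N_def a_def b_def)
  obtain D' where DERIV_D: "(D has_real_derivative D') (at 0)"
    using DERIV_laplace_conv[OF _ integrable_gaussian, of a 0] a unfolding D_def
    by (simp add: continuous_intros)
  have DERIV_N: "(N has_real_derivative a * (1 - a / 2 * (sqrt pi * erfcx (a / 2)))) (at 0)"
    unfolding N_def using a by (intro DERIV_laplace_conv_gaussian_first_moment_at_0) simp
  have D_0: "D 0 = sqrt pi * erfcx (a / 2)"
    unfolding D_def using a by (intro laplace_conv_gaussian_at_0) simp
  have D_0_pos: "D 0 > 0"
    unfolding D_def using a by (intro laplace_conv_pos integrable_gaussian) auto
  have N_0: "N 0 = 0"
    unfolding N_def by (rule laplace_conv_odd_at_0) simp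
  have "(F has_real_derivative b * (a * (1 - a / 2 * D 0)) / D 0) (at 0)"
    using DERIV_D DERIV_N D_0_pos N_0 unfolding F_def[abs_def] D_0[symmetric]
    by (intro DERIV_affine_ratio) auto
  then have "(post_mean theta0 sigma0 sigmaeps has_real_derivative b * (a * (1 - a / 2 * D 0)) / D 0 * (1 / b))
      (at theta0)"
    unfolding post_mean using b by (intro DERIV_chain2[of F]) (auto intro!: derivative_eq_intros)
  moreover have "b * (a * (1 - a / 2 * D 0)) / D 0 * (1 / b) = a / 2 * (2 / D 0 - a)"
    using b D_0_pos by (simp add: field_simps)
  ultimately show ?thesis
    unfolding D_0 by metis
qed

end
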